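(* Every barrier $B$ contains an end-closed subbarrier, i.e. there is a barrier $B'\subseteq B$ which is end-closed.
   Context: Finite subsets of $\mathbb{N}$ are identified with their increasing enumerations. A barrier is an infinite set $B$ of finite subsets of $\mathbb{N}$, no member of which is a proper subset of another, such that every infinite $X\subseteq\bigcup B$ has a nonempty initial segment (in its increasing enumeration) belonging to $B$. For a finite sequence $s$, $s_*$ denotes $s$ with its last element removed, and $B_*=\{s_*: s\in B\}$. For $s$ a finite increasing sequence and $a$ greater than all elements of $s$, $s\cdot(a)$ is the sequence obtained by appending $a$. A barrier $B$ is end-closed if $s\cdot(a)\in B$ for every $s\in B_*$ and every $a\in\bigcup B$ greater than all elements of $s$. *)

theory Defs
  imports Main
begin

text \<open>Finite subsets of the naturals are represented as (finite) values of type nat set;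
  the increasing enumeration is implicit.\<close>

definition initial_segment :: "nat set \<Rightarrow> nat set \<Rightarrow> bool" where
  "initial_segment s X \<longleftrightarrow> s \<subseteq> X \<and> (\<forall>x\<in>X. \<forall>y\<in>s. x \<le> y \<longrightarrow> x \<in> s)"

definition barrier :: "nat set set \<Rightarrow> bool" where
  "barrier B \<longleftrightarrow> infinite B \<and> (\<forall>s\<in>B. finite s)
     \<and> (\<forall>s\<in>B. \<forall>t\<in>B. \<not> s \<subset> t)
     \<and> (\<forall>X. X \<subseteq> \<Union>B \<and> infinite X \<longrightarrow>
           (\<exists>s\<in>B. s \<noteq> {} \<and> finite s \<and> initial_segment s X))"

definition drop_last :: "nat set \<Rightarrow> nat set" where
  "drop_last s = s - {Max s}"

definition end_closed :: "nat set set \<Rightarrow> bool" where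
  "end_closed B \<longleftrightarrow> (\<forall>s\<in>drop_last ` B. \<forall>a\<in>\<Union>B. (\<forall>x\<in>s. x < a) \<longrightarrow> insert a s \<in> B)"

end

theory Submission
  imports Defs
begin

text \<open>Choose an infinite \<open>M \<subseteq> \<Union>B\<close> on which membership of \<open>t \<union> {a}\<close> in \<open>B\<close> does not depend
  on the choice of \<open>a \<in> M\<close> above \<open>t\<close>. Then the restriction \<open>{s \<in> B. s \<subseteq> M}\<close> is again a
  barrier, and it is end-closed because every \<open>s\<^sub>* \<union> {a}\<close> arises from \<open>s = s\<^sub>* \<union> {max s}\<close>
  by exchanging the last element. Such an \<open>M\<close> is built by fusion: once the minima
  \<open>m\<^sub>0 < \<dots> < m\<^sub>k\<close> are chosen, only the finitely many \<open>t \<subseteq> {0..m\<^sub>k}\<close> matter at the next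
  stage, so the pigeonhole principle thins out the current infinite set until the answer is
  the same for all its elements, and \<open>m\<^sub>k\<^sub>+\<^sub>1\<close> is the minimum of the thinned set.\<close>

definition extensions_uniform :: "nat set set \<Rightarrow> nat set \<Rightarrow> nat set \<Rightarrow> bool" where
  "extensions_uniform B F N \<longleftrightarrow>
     (\<forall>t\<subseteq>F. \<forall>a\<in>N. \<forall>b\<in>N. insert a t \<in> B \<longleftrightarrow> insert b t \<in> B)"

definition end_homogeneous :: "nat set set \<Rightarrow> nat set \<Rightarrow> bool" where
  "end_homogeneous B M \<longleftrightarrow>
     (\<forall>t\<subseteq>M. \<forall>a\<in>M. \<forall>b\<in>M. (\<forall>y\<in>t. y < a) \<longrightarrow> (\<forall>y\<in>t. y < b) \<longrightarrow>
        (insert a t \<in> B \<longleftrightarrow> insert b t \<in> B))"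

lemma end_homogeneousD:
  assumes "end_homogeneous B M" and "t \<subseteq> M" and "a \<in> M" and "b \<in> M"
    and "\<forall>y\<in>t. y < a" and "\<forall>y\<in>t. y < b"
  shows "insert a t \<in> B \<longleftrightarrow> insert b t \<in> B"
  using assms unfolding end_homogeneous_def by blast

lemma ex_infinite_extensions_uniform:
  assumes "finite F" and "infinite N"
  shows "\<exists>N'\<subseteq>N. infinite N' \<and> extensions_uniform B F N'"
proof -
  define ext where "ext a = {t \<in> Pow F. insert a t \<in> B}" for a
  have "finite (ext ` N)"
    by (rule finite_subset[of _ "Pow (Pow F)"]) (use assms(1) in \<open>auto simp: ext_def\<close>)
  then obtain a0 where "infinite {a \<in> N. ext a = ext a0}"
    using pigeonhole_infinite[OF assms(2)] by blast
  moreover have "extensions_uniform B F {a \<in> N. ext a = ext a0}"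
    unfolding extensions_uniform_def
  proof (intro allI impI ballI)
    fix t a b assume "t \<subseteq> F" and "a \<in> {a \<in> N. ext a = ext a0}" "b \<in> {a \<in> N. ext a = ext a0}"
    then have "ext a = ext b" by simp
    with \<open>t \<subseteq> F\<close> show "insert a t \<in> B \<longleftrightarrow> insert b t \<in> B"
      unfolding ext_def by blast
  qed
  ultimately show ?thesis
    by (intro exI[of _ "{a \<in> N. ext a = ext a0}"]) simp
qed

lemma fusion_sequence:
  assumes "infinite U"
  obtains N :: "nat \<Rightarrow> nat set"
  where "\<And>k. infinite (N k)" and "\<And>k. N k \<subseteq> U"
    and "\<And>k. N (Suc k) \<subseteq> N k - {LEAST x. x \<in> N k}"
    and "\<And>k. extensions_uniform B {..LEAST x. x \<in> N k} (N (Suc k))"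
proof -
  have "\<exists>N'. (infinite N' \<and> N' \<subseteq> U) \<and>
      N' \<subseteq> N - {LEAST x. x \<in> N} \<and> extensions_uniform B {..LEAST x. x \<in> N} N'"
    if "infinite N \<and> N \<subseteq> U" for N
    using ex_infinite_extensions_uniform[of "{..LEAST x. x \<in> N}" "N - {LEAST x. x \<in> N}" B] that
    by auto
  then have "\<exists>N. \<forall>k. (infinite (N k) \<and> N k \<subseteq> U) \<and>
      N (Suc k) \<subseteq> N k - {LEAST x. x \<in> N k} \<and> extensions_uniform B {..LEAST x. x \<in> N k} (N (Suc k))"
    using assms by (intro dependent_nat_choice) auto
  then show ?thesis using that by blast
qed

lemma infinite_end_homogeneous_subset:
  assumes "infinite U"
  obtains M where "M \<subseteq> U" and "infinite M" and "end_homogeneous B M"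
proof -
  obtain N where N_infinite: "\<And>k. infinite (N k)" and N_subset: "\<And>k. N k \<subseteq> U"
    and shrink: "\<And>k. N (Suc k) \<subseteq> N k - {LEAST x. x \<in> N k}"
    and uniform: "\<And>k. extensions_uniform B {..LEAST x. x \<in> N k} (N (Suc k))"
    using fusion_sequence[OF assms] by blast
  define least where "least k = (LEAST x. x \<in> N k)" for k
  have least_in: "least k \<in> N k" for k
    unfolding least_def using infinite_imp_nonempty[OF N_infinite] by (metis LeastI_ex ex_in_conv)
  have least_le: "x \<in> N k \<Longrightarrow> least k \<le> x" for x k
    unfolding least_def by (rule Least_le)
  have antimono: "k \<le> j \<Longrightarrow> N j \<subseteq> N k" for j k
    using lift_Suc_antimono_le[of N] shrink by blast
  have "least k < least (Suc k)" for k
  proof -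
    have "least (Suc k) \<in> N k - {least k}"
      using least_in[of "Suc k"] shrink[of k] unfolding least_def by blast
    then show ?thesis
      using least_le[of "least (Suc k)" k] by auto
  qed
  then have "strict_mono least"
    by (simp add: strict_mono_Suc_iff)
  \<comment> \<open>The minimum of \<open>N 0\<close> is left out: nothing is known about extensions of \<open>{}\<close> on \<open>N 0\<close>.\<close>
  define M where "M = range (\<lambda>k. least (Suc k))"
  have "M \<subseteq> U"
    using least_in N_subset by (auto simp: M_def)
  moreover have "infinite M"
  proof -
    have "inj (\<lambda>k. least (Suc k))"
      using \<open>strict_mono least\<close> by (simp add: inj_on_def strict_mono_eq)
    then show ?thesis
      unfolding M_def using finite_imageD infinite_UNIV_nat by blast
  qed
  moreover have "end_homogeneous B M"
    unfolding end_homogeneous_def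
  proof (intro allI impI ballI)
    fix t a b assume "t \<subseteq> M" "a \<in> M" "b \<in> M" and below: "\<forall>y\<in>t. y < a" "\<forall>y\<in>t. y < b"
    then obtain i j where a: "a = least (Suc i)" and b: "b = least (Suc j)"
      by (auto simp: M_def)
    define k where "k = min i j"
    have "a \<in> N (Suc k)"
      using a least_in[of "Suc i"] antimono[of "Suc k" "Suc i"] by (auto simp: k_def)
    moreover have "b \<in> N (Suc k)"
      using b least_in[of "Suc j"] antimono[of "Suc k" "Suc j"] by (auto simp: k_def)
    moreover have "t \<subseteq> {..least k}"
    proof
      fix y assume "y \<in> t"
      then obtain l where y: "y = least (Suc l)"
        using \<open>t \<subseteq> M\<close> by (auto simp: M_def)
      have "least (Suc k) \<in> {a, b}"
        using a b by (simp add: k_def min_def)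
      then have "least (Suc l) < least (Suc k)"
        using below \<open>y \<in> t\<close> y by auto
      then have "Suc l \<le> k"
        using \<open>strict_mono least\<close> by (simp add: strict_mono_less)
      then show "y \<in> {..least k}"
        using y least_le least_in antimono by blast
    qed
    ultimately show "insert a t \<in> B \<longleftrightarrow> insert b t \<in> B"
      using uniform[of k] unfolding extensions_uniform_def least_def by blast
  qed
  ultimately show ?thesis
    using that by blast
qed

lemma barrier_empty_notin:
  assumes "barrier B"
  shows "{} \<notin> B"
proof
  assume "{} \<in> B"
  then have "B \<subseteq> {{}}"
    using assms unfolding barrier_def by blast
  then have "finite B"
    by (rule finite_subset) simp
  with assms show False
    by (simp add: barrier_def)
qed

lemma barrier_Union_infinite:
  assumes "barrier B"
  shows "infinite (\<Union>B)"
  using assms finite_UnionD unfolding barrier_def by blast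

lemma barrier_restrict:
  assumes "barrier B" and "M \<subseteq> \<Union>B" and "infinite M"
  shows "barrier {s \<in> B. s \<subseteq> M}"
proof -
  let ?B' = "{s \<in> B. s \<subseteq> M}"
  have segment: "\<exists>s\<in>?B'. s \<noteq> {} \<and> finite s \<and> initial_segment s X"
    if "X \<subseteq> M" and "infinite X" for X
  proof -
    have "X \<subseteq> \<Union>B"
      using that assms(2) by blast
    then obtain s where "s \<in> B" "s \<noteq> {}" "finite s" "initial_segment s X"
      using assms(1) \<open>infinite X\<close> unfolding barrier_def by blast
    moreover from \<open>initial_segment s X\<close> have "s \<subseteq> M"
      using \<open>X \<subseteq> M\<close> unfolding initial_segment_def by blast
    ultimately show ?thesis by blast
  qed
  have "infinite ?B'"
  proof
    assume "finite ?B'"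
    then have "finite (\<Union>?B')"
      using assms(1) by (intro finite_Union) (auto simp: barrier_def)
    then obtain n where n: "\<forall>x\<in>\<Union>?B'. x \<le> n"
      using finite_nat_set_iff_bounded_le by blast
    obtain s where "s \<in> ?B'" "s \<noteq> {}" "initial_segment s (M - {..n})"
      using segment[of "M - {..n}"] assms(3) by auto
    then show False
      using n unfolding initial_segment_def by fastforce
  qed
  moreover have "\<forall>s\<in>?B'. finite s" and "\<forall>s\<in>?B'. \<forall>t\<in>?B'. \<not> s \<subset> t"
    using assms(1) by (simp_all add: barrier_def)
  moreover have "\<forall>X. X \<subseteq> \<Union>?B' \<and> infinite X \<longrightarrow>
      (\<exists>s\<in>?B'. s \<noteq> {} \<and> finite s \<and> initial_segment s X)"
  proof (intro allI impI)
    fix X assume "X \<subseteq> \<Union>?B' \<and> infinite X"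
    then have "X \<subseteq> M" and "infinite X" by auto
    then show "\<exists>s\<in>?B'. s \<noteq> {} \<and> finite s \<and> initial_segment s X"
      by (rule segment)
  qed
  ultimately show ?thesis
    unfolding barrier_def by (intro conjI)
qed

lemma end_closed_restrict:
  assumes "\<forall>s\<in>B. finite s" and "{} \<notin> B" and "end_homogeneous B M"
  shows "end_closed {s \<in> B. s \<subseteq> M}"
  unfolding end_closed_def
proof (intro ballI impI)
  fix r a assume "r \<in> drop_last ` {s \<in> B. s \<subseteq> M}" and "a \<in> \<Union>{s \<in> B. s \<subseteq> M}"
    and below_a: "\<forall>y\<in>r. y < a"
  then obtain s where s: "s \<in> B" "s \<subseteq> M" and r: "r = s - {Max s}" and "a \<in> M"
    unfolding drop_last_def by blast
  have "finite s" and "s \<noteq> {}"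
    using s assms(1,2) by auto
  then have "Max s \<in> s"
    by (rule Max_in)
  have below_Max: "\<forall>y\<in>r. y < Max s"
    using r Max_ge[OF \<open>finite s\<close>] by (auto simp: order.not_eq_order_implies_strict)
  have "r \<subseteq> M" and "Max s \<in> M"
    using s r \<open>Max s \<in> s\<close> by auto
  then have "insert a r \<in> B \<longleftrightarrow> insert (Max s) r \<in> B"
    using end_homogeneousD[OF assms(3)] \<open>a \<in> M\<close> below_a below_Max by blast
  moreover have "insert (Max s) r = s"
    using r \<open>Max s \<in> s\<close> by blast
  ultimately have "insert a r \<in> B"
    using s by simp
  then show "insert a r \<in> {s \<in> B. s \<subseteq> M}"
    using \<open>a \<in> M\<close> r s by auto
qed

theorem lemma2p10:
  assumes "barrier B"
  shows "\<exists>B'. B' \<subseteq> B \<and> barrier B' \<and> end_closed B'"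
proof -
  obtain M where "M \<subseteq> \<Union>B" "infinite M" "end_homogeneous B M"
    using infinite_end_homogeneous_subset[OF barrier_Union_infinite[OF assms]] .
  moreover have "\<forall>s\<in>B. finite s"
    using assms by (simp add: barrier_def)
  ultimately have "barrier {s \<in> B. s \<subseteq> M}" and "end_closed {s \<in> B. s \<subseteq> M}"
    by (simp_all add: barrier_restrict[OF assms] end_closed_restrict barrier_empty_notin[OF assms])
  then show ?thesis
    by (intro exI[of _ "{s \<in> B. s \<subseteq> M}"]) auto
qed

end
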